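(* Let $\varphi:\mathbb{D}\to\mathbb{D}$ be a bijective holomorphic map with $\varphi(0)=0$, and let $m\in\mathrm{Hol}(\mathbb{D})$. If the weighted composition operator $W_{m,\varphi}$, $W_{m,\varphi}f=m\,(f\circ\varphi)$, is similar to a linear isometry of $\mathrm{Hol}(\mathbb{D})$, then $|m(0)|=1$.
   Context: $\mathbb{D}$ is the open unit disc and $\mathrm{Hol}(\mathbb{D})$ the Fréchet space of holomorphic functions on $\mathbb{D}$ with seminorms $\|f\|_{\infty,1-1/p}=\sup_{|z|\le 1-1/p}|f(z)|$, $p\in\mathbb{N}$, and metric $d(f,g)=\sum_{p\ge1}2^{-p}\min(1,\|f-g\|_{\infty,1-1/p})$. A linear isometry of $\mathrm{Hol}(\mathbb{D})$ is a linear operator that is an isometry for $d$. Two operators $T,V$ in the space $\mathcal{L}(\mathrm{Hol}(\mathbb{D}))$ of continuous linear operators are similar if there is an invertible $U\in\mathcal{L}(\mathrm{Hol}(\mathbb{D}))$ with $U^{-1}TU=V$. *)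

theory Defs
  imports "HOL-Analysis.Analysis"
begin

text \<open>Hol(D): holomorphic functions on the unit disc, represented canonically
  as functions that vanish outside the disc.\<close>
definition HolD :: "(complex \<Rightarrow> complex) set" where
  "HolD = {f. f holomorphic_on ball 0 1 \<and> (\<forall>z. z \<notin> ball 0 1 \<longrightarrow> f z = 0)}"

definition supr :: "real \<Rightarrow> (complex \<Rightarrow> complex) \<Rightarrow> real" where
  "supr r f = (SUP z\<in>cball 0 r. norm (f z))"

definition dHol :: "(complex \<Rightarrow> complex) \<Rightarrow> (complex \<Rightarrow> complex) \<Rightarrow> real" where
  "dHol f g = (\<Sum>p. (1/2) ^ (Suc p) * min 1 (supr (1 - 1 / real (Suc p)) (\<lambda>z. f z - g z)))"

definition linear_opH :: "((complex \<Rightarrow> complex) \<Rightarrow> (complex \<Rightarrow> complex)) \<Rightarrow> bool" where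
  "linear_opH T \<longleftrightarrow> (\<forall>f\<in>HolD. T f \<in> HolD) \<and>
     (\<forall>f\<in>HolD. \<forall>g\<in>HolD. T (\<lambda>z. f z + g z) = (\<lambda>z. T f z + T g z)) \<and>
     (\<forall>c. \<forall>f\<in>HolD. T (\<lambda>z. c * f z) = (\<lambda>z. c * T f z))"

definition cont_linear_opH :: "((complex \<Rightarrow> complex) \<Rightarrow> (complex \<Rightarrow> complex)) \<Rightarrow> bool" where
  "cont_linear_opH T \<longleftrightarrow> linear_opH T \<and>
     (\<forall>f\<in>HolD. \<forall>e>0. \<exists>\<delta>>0. \<forall>g\<in>HolD. dHol f g < \<delta> \<longrightarrow> dHol (T f) (T g) < e)"

definition linear_isometryH :: "((complex \<Rightarrow> complex) \<Rightarrow> (complex \<Rightarrow> complex)) \<Rightarrow> bool" where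
  "linear_isometryH T \<longleftrightarrow> linear_opH T \<and> (\<forall>f\<in>HolD. \<forall>g\<in>HolD. dHol (T f) (T g) = dHol f g)"

definition similarH :: "((complex \<Rightarrow> complex) \<Rightarrow> (complex \<Rightarrow> complex)) \<Rightarrow>
    ((complex \<Rightarrow> complex) \<Rightarrow> (complex \<Rightarrow> complex)) \<Rightarrow> bool" where
  "similarH T V \<longleftrightarrow> cont_linear_opH T \<and> cont_linear_opH V \<and>
     (\<exists>U Uinv. cont_linear_opH U \<and> cont_linear_opH Uinv \<and>
        (\<forall>f\<in>HolD. Uinv (U f) = f) \<and> (\<forall>f\<in>HolD. U (Uinv f) = f) \<and>
        (\<forall>f\<in>HolD. Uinv (T (U f)) = V f))"

definition wcomp :: "(complex \<Rightarrow> complex) \<Rightarrow> (complex \<Rightarrow> complex) \<Rightarrow>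
    (complex \<Rightarrow> complex) \<Rightarrow> (complex \<Rightarrow> complex)" where
  "wcomp m \<phi> f = (\<lambda>z. if z \<in> ball 0 1 then m z * f (\<phi> z) else 0)"

end

theory Submission
  imports Defs "HOL-Complex_Analysis.Complex_Analysis"
begin

text \<open>
  Let \<open>W = wcomp m \<phi>\<close> be similar to a linear isometry. Then the powers of \<open>W\<close> are
  equicontinuous at \<open>0\<close>, and the \<open>W\<close>-orbit of any \<open>g \<noteq> 0\<close> stays away from \<open>0\<close>.
  Since \<open>\<phi> 0 = 0\<close>, \<open>(W\<^sup>n 1)(0) = m(0)\<^sup>n\<close>, and equicontinuity bounds this, so
  \<open>|m(0)| \<le> 1\<close>. If \<open>|m(0)| < 1\<close>, then \<open>|m| \<le> \<rho> < 1\<close> on a small disc, which \<open>\<phi>\<close> maps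
  into itself by Schwarz's lemma, so \<open>W\<^sup>n 1 \<rightarrow> 0\<close> there. The orbit is locally bounded, hence
  by Montel's theorem a subsequence converges locally uniformly, by the identity theorem
  to \<open>0\<close>; so \<open>W\<^sup>n 1\<close> comes arbitrarily close to \<open>0\<close>, a contradiction.
\<close>

section \<open>The topology of Hol(D)\<close>

abbreviation rad :: "nat \<Rightarrow> real" where
  "rad p \<equiv> 1 - 1 / real (Suc p)"

lemma rad_nonneg: "0 \<le> rad p"
  and rad_less_1: "rad p < 1"
  by auto

lemma rad_mono: "p \<le> q \<Longrightarrow> rad p \<le> rad q"
  by (simp add: frac_le)

lemma cball_rad_subset: "cball 0 (rad p) \<subseteq> ball (0::complex) 1"
  by (simp add: cball_subset_ball_iff)

lemma compact_subset_cball_rad: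
  fixes K :: "complex set"
  assumes "compact K" "K \<subseteq> ball 0 1"
  obtains p where "K \<subseteq> cball 0 (rad p)"
proof (cases "K = {}")
  case False
  obtain x where x: "x \<in> K" "\<And>y. y \<in> K \<Longrightarrow> norm y \<le> norm x"
    using compact_attains_sup[of "norm ` K"] compact_continuous_image[OF continuous_on_norm_id assms(1)]
      False
    by auto
  have "norm x < 1"
    using x(1) assms(2) by auto
  then obtain p where "inverse (real (Suc p)) < 1 - norm x"
    using reals_Archimedean[of "1 - norm x"] by auto
  then have "K \<subseteq> cball 0 (rad p)"
    using x(2) by (force simp: divide_inverse)
  then show ?thesis by (rule that)
qed simp

lemma HolD_holomorphic: "h \<in> HolD \<Longrightarrow> h holomorphic_on ball 0 1"
  by (simp add: HolD_def)

lemma zero_HolD: "(\<lambda>_. 0) \<in> HolD"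
  by (simp add: HolD_def)

lemma HolD_scale: "h \<in> HolD \<Longrightarrow> (\<lambda>z. c * h z) \<in> HolD"
  unfolding HolD_def by (auto intro: holomorphic_on_mult)

lemma bdd_above_norm_cball:
  assumes "h \<in> HolD" "r < 1"
  shows "bdd_above ((\<lambda>z. norm (h z)) ` cball 0 r)"
proof -
  have "continuous_on (cball 0 r) h"
    using assms by (intro holomorphic_on_imp_continuous_on holomorphic_on_subset[OF HolD_holomorphic])
      auto
  then have "bounded (h ` cball 0 r)"
    by (intro compact_imp_bounded compact_continuous_image) auto
  then show ?thesis
    by (auto simp: bounded_iff intro: bdd_aboveI2)
qed

lemma norm_le_supr: "h \<in> HolD \<Longrightarrow> r < 1 \<Longrightarrow> z \<in> cball 0 r \<Longrightarrow> norm (h z) \<le> supr r h"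
  unfolding supr_def by (rule cSUP_upper[OF _ bdd_above_norm_cball])

lemma supr_le: "0 \<le> r \<Longrightarrow> (\<And>z. z \<in> cball 0 r \<Longrightarrow> norm (h z) \<le> e) \<Longrightarrow> supr r h \<le> e"
  unfolding supr_def by (rule cSUP_least) auto

lemma supr_nonneg:
  assumes "h \<in> HolD" "0 \<le> r" "r < 1"
  shows "0 \<le> supr r h"
proof -
  have "norm (h 0) \<le> supr r h"
    using assms by (intro norm_le_supr) auto
  then show ?thesis
    by (meson norm_ge_zero order_trans)
qed

lemma supr_0: "supr 0 h = norm (h 0)"
  by (simp add: supr_def)

lemma dHol_commute: "dHol f g = dHol g f"
  by (simp add: dHol_def supr_def norm_minus_commute)

lemma dHol_0: "dHol h (\<lambda>_. 0) = (\<Sum>p. (1/2) ^ Suc p * min 1 (supr (rad p) h))"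
  by (simp add: dHol_def)

lemma dHol_term_bounds:
  assumes "h \<in> HolD"
  shows "0 \<le> (1/2) ^ Suc p * min 1 (supr (rad p) h)"
    and "(1/2) ^ Suc p * min 1 (supr (rad p) h) \<le> (1/2) ^ Suc p"
  using supr_nonneg[OF assms rad_nonneg rad_less_1] by auto

lemma summable_dHol_terms:
  "h \<in> HolD \<Longrightarrow> summable (\<lambda>p. (1/2::real) ^ Suc p * min 1 (supr (rad p) h))"
  by (rule summable_comparison_test'[where N=0, OF sums_summable[OF power_half_series]])
    (use dHol_term_bounds in auto)

lemma dHol_term_le:
  assumes "h \<in> HolD"
  shows "(1/2) ^ Suc p * min 1 (supr (rad p) h) \<le> dHol h (\<lambda>_. 0)"
  unfolding dHol_0
  using sum_le_suminf[OF summable_dHol_terms[OF assms], of "{p}"] dHol_term_bounds[OF assms]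
  by auto

lemma dHol_nonneg: "h \<in> HolD \<Longrightarrow> 0 \<le> dHol h (\<lambda>_. 0)"
  using dHol_term_le dHol_term_bounds(1) order_trans by blast

lemma min_1_norm_le_dHol: "h \<in> HolD \<Longrightarrow> min 1 (norm (h 0)) \<le> 2 * dHol h (\<lambda>_. 0)"
  using dHol_term_le[of h 0] by (simp add: supr_0)

lemma supr_less_1_if_dHol_less:
  assumes "h \<in> HolD" "dHol h (\<lambda>_. 0) < (1/2) ^ Suc p"
  shows "supr (rad p) h < 1"
  using dHol_term_le[OF assms(1), of p] assms(2) by (auto simp: min_def split: if_splits)

lemma dHol_le_if_supr_le:
  assumes "h \<in> HolD" "\<And>p. p < N \<Longrightarrow> supr (rad p) h \<le> e" "0 \<le> e"
  shows "dHol h (\<lambda>_. 0) \<le> e + (1/2) ^ N"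
proof -
  let ?t = "\<lambda>p. (1/2::real) ^ Suc p * min 1 (supr (rad p) h)"
  have tail: "(\<lambda>p. (1/2::real) ^ Suc (p + N)) sums ((1/2) ^ N)"
    using sums_mult[OF power_half_series, of "(1/2) ^ N"] by (simp add: power_add mult_ac)
  have "(\<Sum>p<N. ?t p) \<le> (\<Sum>p<N. (1/2) ^ Suc p) * e"
    unfolding sum_distrib_right using assms(2,3)
    by (intro sum_mono mult_left_mono) (auto simp: min_le_iff_disj)
  also have "\<dots> \<le> 1 * e"
  proof (rule mult_right_mono[OF _ assms(3)])
    have "(\<Sum>p<N. (1/2::real) ^ Suc p) \<le> (\<Sum>p. (1/2) ^ Suc p)"
      by (intro sum_le_suminf sums_summable[OF power_half_series]) auto
    then show "(\<Sum>p<N. (1/2::real) ^ Suc p) \<le> 1"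
      by (simp only: sums_unique[OF power_half_series, symmetric])
  qed
  finally have head: "(\<Sum>p<N. ?t p) \<le> e"
    by simp
  have "(\<Sum>p. ?t (p + N)) \<le> (\<Sum>p. (1/2) ^ Suc (p + N))"
    using dHol_term_bounds[OF assms(1)]
    by (intro suminf_le summable_ignore_initial_segment summable_dHol_terms assms(1)
        sums_summable[OF tail]) auto
  then show ?thesis
    unfolding dHol_0 suminf_split_initial_segment[OF summable_dHol_terms[OF assms(1)], of N]
    using head sums_unique[OF tail] by linarith
qed

lemma dHol_scale_less:
  assumes "g \<in> HolD" "0 < d"
  obtains a :: real where "0 < a" "dHol (\<lambda>z. of_real a * g z) (\<lambda>_. 0) < d"
proof -
  obtain N where N: "(1/2::real) ^ N < d/2"
    using real_arch_pow_inv[of "d/2" "1/2::real"] assms(2) by auto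
  define B where "B = supr (rad N) g"
  have "0 \<le> B"
    unfolding B_def using assms(1) by (intro supr_nonneg rad_nonneg rad_less_1)
  define a where "a = d / (2 * (B + 1))"
  have a: "0 < a" "a * B \<le> d/2"
    using \<open>0 \<le> B\<close> assms(2) by (auto simp: a_def field_simps)
  have "dHol (\<lambda>z. of_real a * g z) (\<lambda>_. 0) \<le> d/2 + (1/2) ^ N"
  proof (rule dHol_le_if_supr_le[OF HolD_scale[OF assms(1)]])
    fix p assume "p < N"
    show "supr (rad p) (\<lambda>z. of_real a * g z) \<le> d/2"
    proof (rule supr_le[OF rad_nonneg])
      fix z :: complex assume "z \<in> cball 0 (rad p)"
      then have "z \<in> cball 0 (rad N)"
        using rad_mono[of p N] \<open>p < N\<close> by auto
      then have "norm (g z) \<le> B"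
        unfolding B_def by (rule norm_le_supr[OF assms(1) rad_less_1])
      have "norm (of_real a * g z) = a * norm (g z)"
        using a(1) by (simp add: norm_mult)
      also have "\<dots> \<le> a * B"
        using a(1) \<open>norm (g z) \<le> B\<close> by (intro mult_left_mono) auto
      finally show "norm (of_real a * g z) \<le> d/2"
        using a(2) by linarith
    qed
  qed (use assms in simp)
  with N a(1) that show ?thesis by fastforce
qed

lemma dHol_tendsto_0_if_locally_uniform:
  assumes "\<And>n. h n \<in> HolD"
    and "\<And>K. compact K \<Longrightarrow> K \<subseteq> ball 0 1 \<Longrightarrow> uniform_limit K h (\<lambda>_. 0) sequentially"
  shows "(\<lambda>n. dHol (h n) (\<lambda>_. 0)) \<longlonglongrightarrow> 0"
proof (rule LIMSEQ_I)
  fix \<epsilon> :: real assume "0 < \<epsilon>"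
  obtain N where N: "(1/2::real) ^ N < \<epsilon>/2"
    using real_arch_pow_inv[of "\<epsilon>/2" "1/2::real"] \<open>0 < \<epsilon>\<close> by auto
  have "uniform_limit (cball 0 (rad N)) h (\<lambda>_. 0) sequentially"
    by (intro assms(2) cball_rad_subset) simp
  from uniform_limitD[OF this half_gt_zero[OF \<open>0 < \<epsilon>\<close>]]
  obtain n0 where n0: "\<And>n z. n \<ge> n0 \<Longrightarrow> z \<in> cball 0 (rad N) \<Longrightarrow> norm (h n z) < \<epsilon>/2"
    by (fastforce simp: eventually_sequentially dist_norm)
  have "dHol (h n) (\<lambda>_. 0) \<le> \<epsilon>/2 + (1/2) ^ N" if "n \<ge> n0" for n
  proof (rule dHol_le_if_supr_le[OF assms(1)])
    fix p assume "p < N"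
    then show "supr (rad p) (h n) \<le> \<epsilon>/2"
      using n0[OF that] rad_mono[of p N]
      by (intro supr_le[OF rad_nonneg]) (fastforce intro: less_imp_le)
  qed (use \<open>0 < \<epsilon>\<close> in simp)
  then show "\<exists>n0. \<forall>n\<ge>n0. norm (dHol (h n) (\<lambda>_. 0) - 0) < \<epsilon>"
    using N dHol_nonneg[OF assms(1)] by (intro exI[of _ n0]) force
qed

lemma locally_bounded_vanishing_near_0_subseq:
  assumes "\<And>n. h n \<in> HolD"
    and "\<And>K. compact K \<Longrightarrow> K \<subseteq> ball 0 1 \<Longrightarrow> \<exists>B. \<forall>n. \<forall>z\<in>K. norm (h n z) \<le> B"
    and "0 < r" "r \<le> 1" "\<And>z. z \<in> ball 0 r \<Longrightarrow> (\<lambda>n. h n z) \<longlonglongrightarrow> 0"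
  obtains \<sigma> where "strict_mono \<sigma>"
    "\<And>K. compact K \<Longrightarrow> K \<subseteq> ball 0 1 \<Longrightarrow> uniform_limit K (h \<circ> \<sigma>) (\<lambda>_. 0) sequentially"
proof -
  obtain g \<sigma> where g: "g holomorphic_on ball 0 1" "strict_mono \<sigma>"
      "\<And>z. z \<in> ball 0 1 \<Longrightarrow> (\<lambda>n. h (\<sigma> n) z) \<longlonglongrightarrow> g z"
      "\<And>K. compact K \<Longrightarrow> K \<subseteq> ball 0 1 \<Longrightarrow> uniform_limit K (h \<circ> \<sigma>) g sequentially"
  proof (rule Montel[of "ball 0 1" "range h" h])
    show "open (ball (0::complex) 1)" "range h \<subseteq> range h"
      by simp_all
    show "\<And>k. k \<in> range h \<Longrightarrow> k holomorphic_on ball 0 1"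
      using assms(1) HolD_holomorphic by blast
    fix K :: "complex set" assume "compact K" "K \<subseteq> ball 0 1"
    then obtain B where "\<forall>n. \<forall>z\<in>K. norm (h n z) \<le> B"
      using assms(2) by blast
    then show "\<exists>B. \<forall>k\<in>range h. \<forall>z\<in>K. norm (k z) \<le> B"
      by (intro exI[of _ B]) auto
  qed blast
  have g_near_0: "g z = 0" if "z \<in> ball 0 r" for z
  proof -
    have "(\<lambda>n. h (\<sigma> n) z) \<longlonglongrightarrow> 0"
      using LIMSEQ_subseq_LIMSEQ[OF assms(5)[OF that] g(2)] by (simp add: comp_def)
    moreover have "(\<lambda>n. h (\<sigma> n) z) \<longlonglongrightarrow> g z"
      using that assms(4) by (intro g(3)) auto
    ultimately show ?thesis
      using LIMSEQ_unique by metis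
  qed
  have g_0: "g w = 0" if "w \<in> ball 0 1" for w
  proof (rule analytic_continuation[where f = g and S = "ball 0 1" and U = "ball 0 r" and \<xi> = 0])
    show "ball 0 r \<subseteq> ball (0::complex) 1" "(0::complex) islimpt ball 0 r"
      using assms(3,4) by (auto simp: islimpt_ball)
  qed (use that in \<open>auto simp: g(1) g_near_0\<close>)
  have "uniform_limit K (h \<circ> \<sigma>) (\<lambda>_. 0) sequentially" if "compact K" "K \<subseteq> ball 0 1" for K
  proof -
    have "uniform_limit K (h \<circ> \<sigma>) g sequentially \<longleftrightarrow> uniform_limit K (h \<circ> \<sigma>) (\<lambda>_. 0) sequentially"
      using that(2) g_0 by (intro uniform_limit_cong') auto
    with g(4)[OF that] show ?thesis
      by blast
  qed
  with g(2) show ?thesis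
    by (rule that)
qed

definition oneH :: "complex \<Rightarrow> complex" where
  "oneH z = (if z \<in> ball 0 1 then 1 else 0)"

lemma oneH_HolD: "oneH \<in> HolD"
proof -
  have "oneH holomorphic_on ball 0 1"
    by (rule holomorphic_transform[of "\<lambda>_. 1"]) (simp_all add: oneH_def)
  then show ?thesis
    by (simp add: HolD_def oneH_def)
qed

lemma oneH_0 [simp]: "oneH 0 = 1"
  by (simp add: oneH_def)

section \<open>Operators on Hol(D)\<close>

lemma linear_opH_HolD: "linear_opH T \<Longrightarrow> f \<in> HolD \<Longrightarrow> T f \<in> HolD"
  by (simp add: linear_opH_def)

lemma linear_opH_scale: "linear_opH T \<Longrightarrow> f \<in> HolD \<Longrightarrow> T (\<lambda>z. c * f z) = (\<lambda>z. c * T f z)"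
  by (simp add: linear_opH_def)

lemma linear_opH_zero: "linear_opH T \<Longrightarrow> T (\<lambda>_. 0) = (\<lambda>_. 0)"
  using linear_opH_scale[OF _ zero_HolD, of T 0] by simp

lemma cont_linear_opH_linear: "cont_linear_opH T \<Longrightarrow> linear_opH T"
  by (simp add: cont_linear_opH_def)

lemma funpow_HolD: "linear_opH T \<Longrightarrow> f \<in> HolD \<Longrightarrow> (T ^^ n) f \<in> HolD"
  by (induction n) (simp_all add: linear_opH_HolD)

lemma funpow_scale:
  "linear_opH T \<Longrightarrow> f \<in> HolD \<Longrightarrow> (T ^^ n) (\<lambda>z. c * f z) = (\<lambda>z. c * (T ^^ n) f z)"
  by (induction n) (simp_all add: linear_opH_scale funpow_HolD)

lemma cont_linear_opH_at_0:
  assumes "cont_linear_opH T" "0 < e"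
  obtains d where "0 < d" "\<And>g. g \<in> HolD \<Longrightarrow> dHol g (\<lambda>_. 0) < d \<Longrightarrow> dHol (T g) (\<lambda>_. 0) < e"
proof -
  obtain d where d: "0 < d" "\<forall>g\<in>HolD. dHol (\<lambda>_. 0) g < d \<longrightarrow> dHol (T (\<lambda>_. 0)) (T g) < e"
    using assms zero_HolD unfolding cont_linear_opH_def by blast
  have T0: "T (\<lambda>_. 0) = (\<lambda>_. 0)"
    by (rule linear_opH_zero[OF cont_linear_opH_linear[OF assms(1)]])
  show ?thesis
  proof (rule that[OF d(1)])
    fix g assume "g \<in> HolD" "dHol g (\<lambda>_. 0) < d"
    then have "dHol (\<lambda>_. 0) (T g) < e"
      using d(2) dHol_commute[of g] T0 by auto
    then show "dHol (T g) (\<lambda>_. 0) < e"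
      using dHol_commute[of "T g"] by simp
  qed
qed

lemma linear_isometryH_funpow_dHol:
  assumes "linear_isometryH V" "g \<in> HolD"
  shows "dHol ((V ^^ n) g) (\<lambda>_. 0) = dHol g (\<lambda>_. 0)"
proof (induction n)
  case (Suc n)
  have lin: "linear_opH V" and iso: "\<And>f h. f \<in> HolD \<Longrightarrow> h \<in> HolD \<Longrightarrow> dHol (V f) (V h) = dHol f h"
    using assms(1) by (auto simp: linear_isometryH_def)
  have "dHol (V ((V ^^ n) g)) (V (\<lambda>_. 0)) = dHol ((V ^^ n) g) (\<lambda>_. 0)"
    by (intro iso funpow_HolD lin assms(2) zero_HolD)
  with Suc.IH show ?case
    by (simp add: linear_opH_zero[OF lin])
qed simp

lemma conjugate_funpow:
  assumes "\<forall>f\<in>HolD. U (Ui f) = f" "\<forall>f\<in>HolD. Ui (W (U f)) = V f"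
    and "linear_opH W" "linear_opH V" "linear_opH U" "linear_opH Ui" "g \<in> HolD"
  shows "(W ^^ n) g = U ((V ^^ n) (Ui g))"
proof -
  have step: "W (U f) = U (V f)" if "f \<in> HolD" for f
  proof -
    have "W (U f) \<in> HolD"
      by (rule linear_opH_HolD[OF assms(3) linear_opH_HolD[OF assms(5) that]])
    then have "U (Ui (W (U f))) = W (U f)"
      using assms(1) by blast
    then show ?thesis
      using assms(2) that by simp
  qed
  have "(W ^^ n) (U f) = U ((V ^^ n) f)" if "f \<in> HolD" for f
    using that by (induction n) (simp_all add: step funpow_HolD assms(4))
  from this[OF linear_opH_HolD[OF assms(6,7)]] show ?thesis
    using assms(1,7) by simp
qed

definition power_boundedH :: "((complex \<Rightarrow> complex) \<Rightarrow> (complex \<Rightarrow> complex)) \<Rightarrow> bool" where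
  "power_boundedH T \<longleftrightarrow> (\<forall>e>0. \<exists>d>0. \<forall>g\<in>HolD.
     dHol g (\<lambda>_. 0) < d \<longrightarrow> (\<forall>n. dHol ((T ^^ n) g) (\<lambda>_. 0) < e))"

lemma power_boundedH_D:
  assumes "power_boundedH T" "0 < e"
  obtains d where "0 < d"
    "\<And>g n. g \<in> HolD \<Longrightarrow> dHol g (\<lambda>_. 0) < d \<Longrightarrow> dHol ((T ^^ n) g) (\<lambda>_. 0) < e"
proof -
  obtain d where "0 < d" "\<forall>g\<in>HolD. dHol g (\<lambda>_. 0) < d \<longrightarrow> (\<forall>n. dHol ((T ^^ n) g) (\<lambda>_. 0) < e)"
    using assms unfolding power_boundedH_def by blast
  then show ?thesis
    using that by blast
qed

lemma linear_isometryH_power_bounded: "linear_isometryH V \<Longrightarrow> power_boundedH V"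
  unfolding power_boundedH_def by (auto simp: linear_isometryH_funpow_dHol)

lemma similarH_power_bounded:
  assumes "similarH W V" "power_boundedH V"
  shows "power_boundedH W"
  unfolding power_boundedH_def
proof (intro allI impI)
  fix e :: real assume "0 < e"
  obtain U Ui where U: "cont_linear_opH U" "cont_linear_opH Ui"
      "\<forall>f\<in>HolD. U (Ui f) = f" "\<forall>f\<in>HolD. Ui (W (U f)) = V f"
    using assms(1) unfolding similarH_def by blast
  have lin: "linear_opH V" "linear_opH Ui" "linear_opH U" "linear_opH W"
    using assms(1) U(1,2) by (auto simp: similarH_def cont_linear_opH_def)
  obtain d1 where d1: "0 < d1" "\<And>g. g \<in> HolD \<Longrightarrow> dHol g (\<lambda>_. 0) < d1 \<Longrightarrow> dHol (U g) (\<lambda>_. 0) < e"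
    using cont_linear_opH_at_0[OF U(1) \<open>0 < e\<close>] by blast
  obtain d2 where d2: "0 < d2"
      "\<And>g n. g \<in> HolD \<Longrightarrow> dHol g (\<lambda>_. 0) < d2 \<Longrightarrow> dHol ((V ^^ n) g) (\<lambda>_. 0) < d1"
    using power_boundedH_D[OF assms(2) d1(1)] by blast
  obtain d3 where d3: "0 < d3" "\<And>g. g \<in> HolD \<Longrightarrow> dHol g (\<lambda>_. 0) < d3 \<Longrightarrow> dHol (Ui g) (\<lambda>_. 0) < d2"
    using cont_linear_opH_at_0[OF U(2) d2(1)] by blast
  have "dHol ((W ^^ n) g) (\<lambda>_. 0) < e" if "g \<in> HolD" "dHol g (\<lambda>_. 0) < d3" for g n
  proof -
    have Ui_g: "Ui g \<in> HolD"
      by (rule linear_opH_HolD[OF lin(2) that(1)])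
    have "dHol ((V ^^ n) (Ui g)) (\<lambda>_. 0) < d1"
      by (rule d2(2)[OF Ui_g d3(2)[OF that]])
    then show ?thesis
      unfolding conjugate_funpow[OF U(3,4) lin(4,1,3,2) that(1)]
      by (rule d1(2)[OF funpow_HolD[OF lin(1) Ui_g]])
  qed
  with d3(1) show "\<exists>d>0. \<forall>g\<in>HolD. dHol g (\<lambda>_. 0) < d \<longrightarrow> (\<forall>n. dHol ((W ^^ n) g) (\<lambda>_. 0) < e)"
    by blast
qed

lemma power_bounded_orbit_bounded:
  assumes "power_boundedH T" "linear_opH T" "g \<in> HolD" "compact K" "K \<subseteq> ball 0 1"
  obtains B where "\<And>n z. z \<in> K \<Longrightarrow> norm ((T ^^ n) g z) \<le> B"
proof -
  obtain p where K: "K \<subseteq> cball 0 (rad p)"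
    using compact_subset_cball_rad[OF assms(4,5)] by blast
  obtain d where d: "0 < d"
      "\<And>f n. f \<in> HolD \<Longrightarrow> dHol f (\<lambda>_. 0) < d \<Longrightarrow> dHol ((T ^^ n) f) (\<lambda>_. 0) < (1/2) ^ Suc p"
    using power_boundedH_D[OF assms(1), of "(1/2) ^ Suc p"] by auto
  txt \<open>A small multiple of \<open>g\<close> lies within \<open>d\<close> of \<open>0\<close>; its orbit then has \<open>p\<close>-th
    seminorm below \<open>1\<close>, and linearity scales this back to a bound for the orbit of \<open>g\<close>.\<close>
  obtain a where a: "0 < a" "dHol (\<lambda>z. of_real a * g z) (\<lambda>_. 0) < d"
    using dHol_scale_less[OF assms(3) d(1)] by blast
  have "norm ((T ^^ n) g z) \<le> 1 / a" if "z \<in> K" for n z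
  proof -
    have orbit: "(T ^^ n) (\<lambda>z. of_real a * g z) = (\<lambda>z. of_real a * (T ^^ n) g z)"
      by (rule funpow_scale[OF assms(2,3)])
    have orbit_HolD: "(\<lambda>z. of_real a * (T ^^ n) g z) \<in> HolD"
      by (rule HolD_scale[OF funpow_HolD[OF assms(2,3)]])
    have "supr (rad p) (\<lambda>z. of_real a * (T ^^ n) g z) < 1"
      using d(2)[OF HolD_scale[OF assms(3)] a(2), of n] unfolding orbit
      by (rule supr_less_1_if_dHol_less[OF orbit_HolD])
    moreover have "norm (of_real a * (T ^^ n) g z) \<le> supr (rad p) (\<lambda>z. of_real a * (T ^^ n) g z)"
      using K that by (intro norm_le_supr[OF orbit_HolD rad_less_1]) auto
    ultimately have "a * norm ((T ^^ n) g z) < 1"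
      using a(1) by (simp add: norm_mult)
    then show ?thesis
      using a(1) by (simp add: field_simps)
  qed
  then show ?thesis
    by (rule that)
qed

lemma similar_isometry_orbit_bounded_below:
  assumes "similarH W V" "linear_isometryH V" "g \<in> HolD" "0 < dHol g (\<lambda>_. 0)"
  obtains \<delta> where "0 < \<delta>" "\<And>n. \<delta> \<le> dHol ((W ^^ n) g) (\<lambda>_. 0)"
proof -
  obtain U Ui where U: "cont_linear_opH U" "cont_linear_opH Ui"
      "\<forall>f\<in>HolD. Ui (U f) = f" "\<forall>f\<in>HolD. U (Ui f) = f" "\<forall>f\<in>HolD. Ui (W (U f)) = V f"
    using assms(1) unfolding similarH_def by blast
  have lin: "linear_opH U" "linear_opH V" "linear_opH Ui" "linear_opH W"
    using assms(1) U(1,2) by (auto simp: similarH_def cont_linear_opH_def)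
  have orbit: "(W ^^ n) g = U ((V ^^ n) (Ui g))" for n
    by (rule conjugate_funpow[OF U(4,5) lin(4,2,1,3) assms(3)])
  have Ui_g: "Ui g \<in> HolD"
    by (rule linear_opH_HolD[OF lin(3) assms(3)])
  obtain d1 where d1: "0 < d1"
      "\<And>f. f \<in> HolD \<Longrightarrow> dHol f (\<lambda>_. 0) < d1 \<Longrightarrow> dHol (U f) (\<lambda>_. 0) < dHol g (\<lambda>_. 0)"
    using cont_linear_opH_at_0[OF U(1) assms(4)] by blast
  obtain d2 where d2: "0 < d2" "\<And>f. f \<in> HolD \<Longrightarrow> dHol f (\<lambda>_. 0) < d2 \<Longrightarrow> dHol (Ui f) (\<lambda>_. 0) < d1"
    using cont_linear_opH_at_0[OF U(2) d1(1)] by blast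
  txt \<open>If \<open>W\<^sup>n g\<close> were close to \<open>0\<close>, so would be \<open>Ui (W\<^sup>n g) = V\<^sup>n (Ui g)\<close>, hence
    \<open>Ui g\<close>, as \<open>V\<close> is an isometry, and hence \<open>g = U (Ui g)\<close>.\<close>
  have "d2 \<le> dHol ((W ^^ n) g) (\<lambda>_. 0)" for n
  proof (rule ccontr)
    assume "\<not> d2 \<le> dHol ((W ^^ n) g) (\<lambda>_. 0)"
    moreover have "(W ^^ n) g \<in> HolD"
      unfolding orbit by (rule linear_opH_HolD[OF lin(1) funpow_HolD[OF lin(2) Ui_g]])
    ultimately have "dHol (Ui ((W ^^ n) g)) (\<lambda>_. 0) < d1"
      by (intro d2(2)) auto
    also have "Ui ((W ^^ n) g) = (V ^^ n) (Ui g)"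
      unfolding orbit using U(3) funpow_HolD[OF lin(2) Ui_g] by blast
    finally have "dHol (Ui g) (\<lambda>_. 0) < d1"
      by (simp add: linear_isometryH_funpow_dHol[OF assms(2) Ui_g])
    then have "dHol (U (Ui g)) (\<lambda>_. 0) < dHol g (\<lambda>_. 0)"
      by (rule d1(2)[OF Ui_g])
    then show False
      using U(4) assms(3) by simp
  qed
  with d2(1) show ?thesis
    by (rule that)
qed

section \<open>Weighted composition operators\<close>

lemma wcomp_funpow_at_0: "\<phi> 0 = 0 \<Longrightarrow> (wcomp m \<phi> ^^ n) g 0 = m 0 ^ n * g 0"
  by (induction n) (simp_all add: wcomp_def)

lemma Schwarz_maps_cball:
  assumes "\<phi> holomorphic_on ball 0 1" "\<phi> ` ball 0 1 \<subseteq> ball 0 1" "\<phi> 0 = 0"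
    and "r < 1" "z \<in> cball 0 r"
  shows "\<phi> z \<in> cball 0 r"
proof -
  have "norm (\<phi> z) \<le> norm z"
    using assms(2,4,5) by (intro Schwarz_Lemma(1)[OF assms(1,3)]) (auto simp: image_subset_iff)
  with assms(5) show ?thesis
    by simp
qed

lemma norm_wcomp_funpow_le:
  assumes "r < 1" "\<And>z. z \<in> cball 0 r \<Longrightarrow> \<phi> z \<in> cball 0 r"
    and "\<And>z. z \<in> cball 0 r \<Longrightarrow> norm (m z) \<le> \<rho>" "0 \<le> \<rho>"
    and "\<And>z. z \<in> cball 0 r \<Longrightarrow> norm (g z) \<le> B" "z \<in> cball 0 r"
  shows "norm ((wcomp m \<phi> ^^ n) g z) \<le> \<rho> ^ n * B"
  using assms(6)
proof (induction n arbitrary: z)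
  case 0
  then show ?case
    using assms(5) by simp
next
  case (Suc n)
  have "norm ((wcomp m \<phi> ^^ Suc n) g z) = norm (m z) * norm ((wcomp m \<phi> ^^ n) g (\<phi> z))"
    using Suc.prems assms(1) by (simp add: wcomp_def norm_mult)
  also have "\<dots> \<le> \<rho> * (\<rho> ^ n * B)"
    by (rule mult_mono[OF assms(3)[OF Suc.prems] Suc.IH[OF assms(2)[OF Suc.prems]] assms(4)
          norm_ge_zero])
  finally show ?case
    by (simp add: mult.assoc)
qed

lemma wcomp_funpow_tendsto_0_near_0:
  assumes "\<phi> holomorphic_on ball 0 1" "\<phi> ` ball 0 1 \<subseteq> ball 0 1" "\<phi> 0 = 0"
    and "m \<in> HolD" "norm (m 0) < 1" "g \<in> HolD"
  obtains r where "0 < r" "r \<le> 1" "\<And>z. z \<in> ball 0 r \<Longrightarrow> (\<lambda>n. (wcomp m \<phi> ^^ n) g z) \<longlonglongrightarrow> 0"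
proof -
  define \<rho> where "\<rho> = (1 + norm (m 0)) / 2"
  have \<rho>: "0 \<le> \<rho>" "\<rho> < 1" "norm (m 0) < \<rho>"
    using assms(5) by (auto simp: \<rho>_def)
  have "isCont m 0"
    by (rule continuous_on_interior[OF holomorphic_on_imp_continuous_on[OF HolD_holomorphic[OF assms(4)]]])
      simp
  moreover have "0 < \<rho> - norm (m 0)"
    using \<rho>(3) by simp
  ultimately obtain d where d: "0 < d" "\<forall>z. dist z 0 < d \<longrightarrow> dist (m z) (m 0) < \<rho> - norm (m 0)"
    unfolding continuous_at_eps_delta by blast
  define r where "r = min (d/2) (1/2)"
  have r: "0 < r" "r < 1" "r < d"
    using d(1) by (auto simp: r_def)
  have m_le: "norm (m z) \<le> \<rho>" if "z \<in> cball 0 r" for z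
  proof -
    have "dist (m z) (m 0) < \<rho> - norm (m 0)"
      using that r(3) by (intro d(2)[rule_format]) simp
    then show ?thesis
      using norm_triangle_ineq2[of "m z" "m 0"] by (simp add: dist_norm)
  qed
  have bound: "norm ((wcomp m \<phi> ^^ n) g z) \<le> \<rho> ^ n * supr r g" if "z \<in> cball 0 r" for n z
    by (rule norm_wcomp_funpow_le[OF r(2) Schwarz_maps_cball[OF assms(1-3) r(2)] m_le \<rho>(1)
          norm_le_supr[OF assms(6) r(2)] that])
  have "(\<lambda>n. (wcomp m \<phi> ^^ n) g z) \<longlonglongrightarrow> 0" if "z \<in> ball 0 r" for z
  proof (rule Lim_null_comparison)
    show "\<forall>\<^sub>F n in sequentially. norm ((wcomp m \<phi> ^^ n) g z) \<le> \<rho> ^ n * supr r g"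
      using bound that by (intro always_eventually) auto
    show "(\<lambda>n. \<rho> ^ n * supr r g) \<longlonglongrightarrow> 0"
      using \<rho> by (intro tendsto_mult_left_zero LIMSEQ_power_zero) simp
  qed
  with r(1) less_imp_le[OF r(2)] show ?thesis
    by (rule that)
qed

lemma le_1_if_powers_bounded:
  fixes x :: real
  assumes "\<And>n. x ^ n \<le> B"
  shows "x \<le> 1"
proof (rule ccontr)
  assume "\<not> x \<le> 1"
  then obtain n where "B < x ^ n"
    using real_arch_pow by (metis not_le)
  with assms[of n] show False
    by simp
qed

lemma power_bounded_wcomp_norm_le_1:
  assumes "power_boundedH (wcomp m \<phi>)" "linear_opH (wcomp m \<phi>)" "\<phi> 0 = 0"
  shows "norm (m 0) \<le> 1"
proof -
  have "compact {0::complex}" "{0::complex} \<subseteq> ball 0 1"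
    by simp_all
  then obtain B where "\<And>n z. z \<in> {0} \<Longrightarrow> norm ((wcomp m \<phi> ^^ n) oneH z) \<le> B"
    using power_bounded_orbit_bounded[OF assms(1,2) oneH_HolD] by blast
  then have "norm ((wcomp m \<phi> ^^ n) oneH 0) \<le> B" for n
    by blast
  then have "norm (m 0) ^ n \<le> B" for n
    by (simp add: wcomp_funpow_at_0[of \<phi>, OF assms(3)] norm_power)
  then show ?thesis
    by (rule le_1_if_powers_bounded)
qed

lemma power_bounded_wcomp_subseq_tendsto_0:
  assumes "\<phi> holomorphic_on ball 0 1" "\<phi> ` ball 0 1 \<subseteq> ball 0 1" "\<phi> 0 = 0"
    and "m \<in> HolD" "norm (m 0) < 1"
    and "power_boundedH (wcomp m \<phi>)" "linear_opH (wcomp m \<phi>)" "g \<in> HolD"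
  obtains \<sigma> where "(\<lambda>n. dHol ((wcomp m \<phi> ^^ \<sigma> n) g) (\<lambda>_. 0)) \<longlonglongrightarrow> 0"
proof -
  let ?W = "wcomp m \<phi>"
  have orbit_bounded: "\<exists>B. \<forall>n. \<forall>z\<in>K. norm ((?W ^^ n) g z) \<le> B"
    if "compact K" "K \<subseteq> ball 0 1" for K
    by (rule power_bounded_orbit_bounded[OF assms(6-8) that]) blast
  obtain r where r: "0 < r" "r \<le> 1" "\<And>z. z \<in> ball 0 r \<Longrightarrow> (\<lambda>n. (?W ^^ n) g z) \<longlonglongrightarrow> 0"
    using wcomp_funpow_tendsto_0_near_0[OF assms(1-5,8)] by blast
  obtain \<sigma> where "\<And>K. compact K \<Longrightarrow> K \<subseteq> ball 0 1 \<Longrightarrow>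
      uniform_limit K ((\<lambda>n. (?W ^^ n) g) \<circ> \<sigma>) (\<lambda>_. 0) sequentially"
    using locally_bounded_vanishing_near_0_subseq[OF funpow_HolD[OF assms(7,8)] orbit_bounded r]
    by blast
  then have "(\<lambda>n. dHol ((?W ^^ \<sigma> n) g) (\<lambda>_. 0)) \<longlonglongrightarrow> 0"
    using dHol_tendsto_0_if_locally_uniform[of "(\<lambda>n. (?W ^^ n) g) \<circ> \<sigma>"]
    by (simp add: comp_def funpow_HolD[OF assms(7,8)])
  then show ?thesis
    by (rule that)
qed

theorem lemma3p5:
  fixes \<phi> m :: "complex \<Rightarrow> complex"
  assumes "\<phi> holomorphic_on ball 0 1"
    and "bij_betw \<phi> (ball 0 1) (ball 0 1)"
    and "\<phi> 0 = 0"
    and "m \<in> HolD"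
    and "\<exists>V. linear_isometryH V \<and> similarH (wcomp m \<phi>) V"
  shows "norm (m 0) = 1"
proof -
  obtain V where V: "linear_isometryH V" "similarH (wcomp m \<phi>) V"
    using assms(5) by blast
  have lin: "linear_opH (wcomp m \<phi>)"
    using V(2) by (simp add: similarH_def cont_linear_opH_def)
  have pb: "power_boundedH (wcomp m \<phi>)"
    by (rule similarH_power_bounded[OF V(2) linear_isometryH_power_bounded[OF V(1)]])
  have "\<not> norm (m 0) < 1"
  proof
    assume "norm (m 0) < 1"
    moreover have "\<phi> ` ball 0 1 \<subseteq> ball 0 1"
      using assms(2) by (simp add: bij_betw_def)
    ultimately obtain \<sigma> where lim: "(\<lambda>n. dHol ((wcomp m \<phi> ^^ \<sigma> n) oneH) (\<lambda>_. 0)) \<longlonglongrightarrow> 0"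
      using power_bounded_wcomp_subseq_tendsto_0[OF assms(1) _ assms(3,4) _ pb lin oneH_HolD] by blast
    have "0 < dHol oneH (\<lambda>_. 0)"
      using min_1_norm_le_dHol[OF oneH_HolD] by simp
    then obtain \<delta> where \<delta>: "0 < \<delta>" "\<And>n. \<delta> \<le> dHol ((wcomp m \<phi> ^^ n) oneH) (\<lambda>_. 0)"
      using similar_isometry_orbit_bounded_below[OF V(2,1) oneH_HolD] by blast
    from order_tendstoD(2)[OF lim \<delta>(1)] obtain n where "dHol ((wcomp m \<phi> ^^ \<sigma> n) oneH) (\<lambda>_. 0) < \<delta>"
      by (auto simp: eventually_sequentially)
    with \<delta>(2)[of "\<sigma> n"] show False
      by linarith
  qed
  with power_bounded_wcomp_norm_le_1[OF pb lin assms(3)] show ?thesis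
    by linarith
qed

end
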